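(* Let $\mathcal{R}=(\mathcal{W},\mathcal{R}_1,\mathcal{R}_2)$ with $\mathcal{W}=\{1,\dots,m\}$, let $\mathcal{S}$, $L$, $K_1,\dots,K_4$ be constructed from $\mathcal{R}$ as below, and let $\mathcal{T}$ be a solution to the $\mathcal{S}$-cyclic triomino problem. For $s\in\mathbb{Z}^2$: if $p(s,1)$ holds, then $q(s+u_j,1)$ holds for every $1\le j\le 4$; and if $q(s,1)$ holds, then $p(s+u_j,1)$ holds for every $1\le j\le 4$.
   Context: A domino set is $\mathcal{R}=(\mathcal{W},\mathcal{R}_1,\mathcal{R}_2)$ with $\mathcal{W}$ non-empty finite and $\mathcal{R}_1,\mathcal{R}_2\subset\mathcal{W}^2$; here $\mathcal{W}=\{1,\dots,m\}$. Let $u_1=(1,0),u_2=(0,1),u_3=(-1,0),u_4=(0,-1)$, indices mod 4. Fix $n\ge 2m+1$ and regard integers as elements of $\mathbb{Z}_n$. Let $L=\{(w,0,0): w\in\mathcal{W}\}$, $K_1=L\cup\{(0,b,a):(a,b)\in\mathcal{R}_1\}$, $K_2=L\cup\{(0,a,b):(a,b)\in\mathcal{R}_2\}$, $K_3=L\cup\{(0,a,b):(a,b)\in\mathcal{R}_1\}$, $K_4=L\cup\{(0,b,a):(a,b)\in\mathcal{R}_2\}$, with $K_{i+4}=K_i$. Let $\mathcal{V}=\mathbb{Z}_n$, $\mathcal{S}_i=\{(a+k,b+k,c+k):(a,b,c)\in K_i, k\in\mathcal{V}\}$, $\mathcal{S}_{i+4}=\mathcal{S}_i$, and $\mathcal{S}=(\mathcal{V},\mathcal{S}_1,\dots,\mathcal{S}_4)$.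 A solution to the $\mathcal{S}$-cyclic triomino problem is a function $\mathcal{T}:\mathbb{Z}^2\to\mathcal{V}$ with $(\mathcal{T}(s),\mathcal{T}(s+u_i),\mathcal{T}(s+u_{i+1}))\in\mathcal{S}_i$ for all $s$ and $1\le i\le 4$. For $s\in\mathbb{Z}^2$, $i\in\mathbb{Z}$, $p(s,i)$ is the statement $(\mathcal{T}(s),\mathcal{T}(s+u_i),\mathcal{T}(s+u_{i+1}))\in L$ and $q(s,i)$ is the statement $(\mathcal{T}(s),\mathcal{T}(s+u_i),\mathcal{T}(s+u_{i+1}))\in K_i\setminus L$. *)

theory Defs
  imports Main
begin

text \<open>Elements of Z_n are represented by their canonical representatives in {0..<n} (ints).
  The alphabet W = {1..m}; domino relations R1, R2 are sets of pairs in W x W.\<close>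

definition shift :: "int \<times> int \<Rightarrow> int \<times> int \<Rightarrow> int \<times> int" where
  "shift s v = (fst s + fst v, snd s + snd v)"

definition u :: "int \<Rightarrow> int \<times> int" where
  "u i = (if i mod 4 = 1 then (1,0) else if i mod 4 = 2 then (0,1)
          else if i mod 4 = 3 then (-1,0) else (0,-1))"

definition Lset :: "int \<Rightarrow> (int \<times> int \<times> int) set" where
  "Lset m = {(w,0,0) | w. w \<in> {1..m}}"

definition Kset :: "int \<Rightarrow> (int \<times> int) set \<Rightarrow> (int \<times> int) set \<Rightarrow> int \<Rightarrow> (int \<times> int \<times> int) set" where
  "Kset m R1 R2 i = Lset m \<union>
     (if i mod 4 = 1 then {(0,b,a) | a b. (a,b) \<in> R1}
      else if i mod 4 = 2 then {(0,a,b) | a b. (a,b) \<in> R2}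
      else if i mod 4 = 3 then {(0,a,b) | a b. (a,b) \<in> R1}
      else {(0,b,a) | a b. (a,b) \<in> R2})"

definition Sset :: "int \<Rightarrow> int \<Rightarrow> (int \<times> int) set \<Rightarrow> (int \<times> int) set \<Rightarrow> int \<Rightarrow> (int \<times> int \<times> int) set" where
  "Sset n m R1 R2 i = {((a + k) mod n, (b + k) mod n, (c + k) mod n) | a b c k.
                          (a,b,c) \<in> Kset m R1 R2 i}"

definition triple :: "(int \<times> int \<Rightarrow> int) \<Rightarrow> int \<times> int \<Rightarrow> int \<Rightarrow> int \<times> int \<times> int" where
  "triple T s i = (T s, T (shift s (u i)), T (shift s (u (i + 1))))"

definition is_solution :: "int \<Rightarrow> int \<Rightarrow> (int \<times> int) set \<Rightarrow> (int \<times> int) set \<Rightarrow> (int \<times> int \<Rightarrow> int) \<Rightarrow> bool" where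
  "is_solution n m R1 R2 T \<longleftrightarrow> (\<forall>s. T s \<in> {0..<n}) \<and>
     (\<forall>s. \<forall>i\<in>{1..4}. triple T s i \<in> Sset n m R1 R2 i)"

definition p :: "int \<Rightarrow> (int \<times> int \<Rightarrow> int) \<Rightarrow> int \<times> int \<Rightarrow> int \<Rightarrow> bool" where
  "p m T s i \<longleftrightarrow> triple T s i \<in> Lset m"

definition q :: "int \<Rightarrow> (int \<times> int) set \<Rightarrow> (int \<times> int) set \<Rightarrow> (int \<times> int \<Rightarrow> int) \<Rightarrow> int \<times> int \<Rightarrow> int \<Rightarrow> bool" where
  "q m R1 R2 T s i \<longleftrightarrow> triple T s i \<in> Kset m R1 R2 i - Lset m"

end

theory Submission
  imports Defs
begin

text \<open>Read the values of a solution as heights on the cycle \<open>Z_n\<close> and say that \<open>y\<close> rises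
  above \<open>x\<close> if \<open>y - x\<close> is one of \<open>1, \<dots>, m\<close> mod \<open>n\<close>; since \<open>n \<ge> 2m + 1\<close> this relation is
  asymmetric. A corner triple is a translate of some \<open>(w, 0, 0)\<close> or of some \<open>(0, b, a)\<close>: either
  both neighbours of the corner agree and lie below the centre, or both rise above it. Going
  round the four corners, every site is a peak (four equal neighbours below it) or a valley (four
  neighbours above it), and asymmetry forces peaks and valleys to alternate. Now \<open>p(s,1)\<close> makes
  \<open>s\<close> a peak over the value \<open>0\<close>, so its neighbours are valleys of height \<open>0\<close>, where the corner
  triple is an untranslated element of \<open>K_1 \<setminus> L\<close>; and \<open>q(s,1)\<close> makes \<open>s\<close> a valley of height
  \<open>0\<close>, so its neighbours are peaks over \<open>0\<close>, whose corner triples lie in \<open>L\<close>.\<close>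

definition rises :: "int \<Rightarrow> int \<Rightarrow> int \<Rightarrow> int \<Rightarrow> bool" where
  "rises n m x y \<longleftrightarrow> (y - x) mod n \<in> {1..m}"

definition peak :: "int \<Rightarrow> int \<Rightarrow> (int \<times> int \<Rightarrow> int) \<Rightarrow> int \<times> int \<Rightarrow> bool" where
  "peak n m T s \<longleftrightarrow> (\<forall>j\<in>{1..4}.
     T (shift s (u j)) = T (shift s (u 1)) \<and> rises n m (T (shift s (u j))) (T s))"

definition valley :: "int \<Rightarrow> int \<Rightarrow> (int \<times> int \<Rightarrow> int) \<Rightarrow> int \<times> int \<Rightarrow> bool" where
  "valley n m T s \<longleftrightarrow> (\<forall>j\<in>{1..4}. rises n m (T s) (T (shift s (u j))))"

lemma rises_asym:
  assumes "2 * m < n" "rises n m x y"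
  shows "\<not> rises n m y x"
proof
  assume "rises n m y x"
  moreover have "(x - y) mod n = (if (y - x) mod n = 0 then 0 else n - (y - x) mod n)"
    using zmod_zminus1_eq_if[of "y - x" n] by simp
  ultimately show False
    using assms unfolding rises_def by (auto split: if_splits)
qed

lemma rises_from_zero_iff:
  assumes "0 \<le> y" "y < n" "m < n"
  shows "rises n m 0 y \<longleftrightarrow> y \<in> {1..m}"
  using assms by (simp add: rises_def)

lemma rises_translate:
  assumes "x \<in> {1..m}" "m < n"
  shows "rises n m (k mod n) ((x + k) mod n)"
  using assms by (simp add: rises_def mod_diff_eq)

lemma ball_1_to_4: "(\<forall>j\<in>{1..4::int}. P j) \<longleftrightarrow> P 1 \<and> P 2 \<and> P 3 \<and> P 4"
proof -
  have "{1..4::int} = {1, 2, 3, 4}" by auto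
  then show ?thesis by simp
qed

lemma neighbour_back:
  assumes "j \<in> {1..4}"
  shows "\<exists>j'\<in>{1..4}. shift (shift s (u j)) (u j') = s"
proof -
  have "j = 1 \<or> j = 2 \<or> j = 3 \<or> j = 4" using assms by auto
  then show ?thesis
    by (elim disjE) (auto simp: shift_def u_def intro!: bexI[of _ "(j + 1) mod 4 + 1"])
qed

lemma Kset_cases:
  assumes "(a, b, c) \<in> Kset m R1 R2 i"
    and "R1 \<subseteq> {1..m} \<times> {1..m}" "R2 \<subseteq> {1..m} \<times> {1..m}"
  obtains "a \<in> {1..m}" "b = 0" "c = 0" | "a = 0" "b \<in> {1..m}" "c \<in> {1..m}"
  using assms unfolding Kset_def Lset_def by (auto split: if_splits)

lemma Sset_cases:
  assumes "(x, y, z) \<in> Sset n m R1 R2 i" "m < n"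
    and "R1 \<subseteq> {1..m} \<times> {1..m}" "R2 \<subseteq> {1..m} \<times> {1..m}"
  shows "(y = z \<and> rises n m y x) \<or> (rises n m x y \<and> rises n m x z)"
proof -
  obtain a b c k where xyz: "x = (a + k) mod n" "y = (b + k) mod n" "z = (c + k) mod n"
    and abc: "(a, b, c) \<in> Kset m R1 R2 i"
    using assms(1) unfolding Sset_def by auto
  from abc assms(3,4) show ?thesis
    by (cases rule: Kset_cases) (use xyz rises_translate[OF _ \<open>m < n\<close>] in auto)
qed

lemma Sset1_at_zero:
  assumes "(0, y, z) \<in> Sset n m R1 R2 1" "m < n" "R1 \<subseteq> {1..m} \<times> {1..m}"
  shows "rises n m y 0 \<or> (z, y) \<in> R1"
proof -
  obtain a b c k where abc: "(a, b, c) \<in> Kset m R1 R2 1"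
    and xyz: "0 = (a + k) mod n" "y = (b + k) mod n" "z = (c + k) mod n"
    using assms(1) unfolding Sset_def by blast
  show ?thesis
  proof (cases "(a, b, c) \<in> Lset m")
    case True
    then have "a \<in> {1..m}" "b = 0" "c = 0" unfolding Lset_def by auto
    then show ?thesis
      using xyz rises_translate[OF _ \<open>m < n\<close>, of a k] by auto
  next
    case False
    then have "a = 0" "(c, b) \<in> R1" using abc unfolding Kset_def by auto
    moreover have "k mod n = 0" using xyz(1) \<open>a = 0\<close> by simp
    ultimately have "y = b mod n" "z = c mod n"
      using xyz(2,3) by (simp_all add: mod_add_right_eq[symmetric])
    moreover have "b mod n = b" "c mod n = c"
      using \<open>(c, b) \<in> R1\<close> assms(2,3) by auto
    ultimately show ?thesis using \<open>(c, b) \<in> R1\<close> by simp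
  qed
qed

lemma solution_corner:
  assumes "is_solution n m R1 R2 T" "i \<in> {1..4}"
  shows "(T s, T (shift s (u i)), T (shift s (u (i + 1)))) \<in> Sset n m R1 R2 i"
  using assms unfolding is_solution_def triple_def by blast

lemma solution_range:
  assumes "is_solution n m R1 R2 T"
  shows "0 \<le> T s" "T s < n"
  using assms unfolding is_solution_def atLeastLessThan_iff by blast+

lemma p1_iff:
  "p m T s 1 \<longleftrightarrow> T s \<in> {1..m} \<and> T (shift s (u 1)) = 0 \<and> T (shift s (u 2)) = 0"
  by (auto simp: p_def triple_def Lset_def)

lemma q1_iff:
  "q m R1 R2 T s 1 \<longleftrightarrow> T s = 0 \<and> (T (shift s (u 2)), T (shift s (u 1))) \<in> R1"
  by (auto simp: q_def triple_def Kset_def Lset_def)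

locale triomino_solution =
  fixes n m :: int and R1 R2 :: "(int \<times> int) set" and T :: "int \<times> int \<Rightarrow> int"
  assumes m_pos: "1 \<le> m" and gap: "2 * m < n"
    and R1_range: "R1 \<subseteq> {1..m} \<times> {1..m}" and R2_range: "R2 \<subseteq> {1..m} \<times> {1..m}"
    and solution: "is_solution n m R1 R2 T"
begin

lemma m_less_n: "m < n"
  using m_pos gap by simp

lemma corner:
  assumes "i \<in> {1..4}"
  shows "(T (shift s (u i)) = T (shift s (u (i + 1))) \<and> rises n m (T (shift s (u i))) (T s))
    \<or> (rises n m (T s) (T (shift s (u i))) \<and> rises n m (T s) (T (shift s (u (i + 1)))))"
  using Sset_cases[OF solution_corner[OF solution assms] m_less_n R1_range R2_range] .

text \<open>Once the neighbours at one corner rise, the next corner cannot have its first neighbour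
  below the centre, so its neighbours rise as well.\<close>

lemma peak_or_valley: "peak n m T s \<or> valley n m T s"
proof -
  have "u 5 = u 1" by (simp add: u_def)
  note corners = corner[of 1 s, simplified] corner[of 2 s, simplified]
    corner[of 3 s, simplified] corner[of 4 s, simplified, unfolded this]
  have asym: "rises n m x y \<Longrightarrow> \<not> rises n m y x" for x y
    using rises_asym[OF gap] .
  show ?thesis
  proof (cases "rises n m (T s) (T (shift s (u 1)))")
    case True
    then have "valley n m T s"
      using corners(1-3) asym unfolding valley_def ball_1_to_4 by metis
    then show ?thesis ..
  next
    case False
    then have "peak n m T s"
      using corners asym unfolding peak_def ball_1_to_4 by metis
    then show ?thesis ..
  qed
qed

lemma peak_neighbour_valley:
  assumes "peak n m T s" "j \<in> {1..4}"
  shows "valley n m T (shift s (u j))"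
proof -
  obtain j' where "j' \<in> {1..4}" "shift (shift s (u j)) (u j') = s"
    using neighbour_back[OF assms(2)] by blast
  moreover have "rises n m (T (shift s (u j))) (T s)"
    using assms unfolding peak_def by blast
  ultimately have "\<not> peak n m T (shift s (u j))"
    using rises_asym[OF gap] unfolding peak_def by metis
  then show ?thesis using peak_or_valley by blast
qed

lemma valley_neighbour_peak:
  assumes "valley n m T s" "j \<in> {1..4}"
  shows "peak n m T (shift s (u j))"
proof -
  obtain j' where "j' \<in> {1..4}" "shift (shift s (u j)) (u j') = s"
    using neighbour_back[OF assms(2)] by blast
  moreover have "rises n m (T s) (T (shift s (u j)))"
    using assms unfolding valley_def by blast
  ultimately have "\<not> valley n m T (shift s (u j))"
    using rises_asym[OF gap] unfolding valley_def by metis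
  then show ?thesis using peak_or_valley by blast
qed

lemma valley_at_zero_q1:
  assumes "valley n m T s" "T s = 0"
  shows "q m R1 R2 T s 1"
proof -
  have "(0, T (shift s (u 1)), T (shift s (u 2))) \<in> Sset n m R1 R2 1"
    using solution_corner[OF solution, of 1 s] assms(2) by simp
  moreover have "\<not> rises n m (T (shift s (u 1))) 0"
    using assms rises_asym[OF gap] unfolding valley_def by auto
  ultimately show ?thesis
    using Sset1_at_zero[OF _ m_less_n R1_range] assms(2) q1_iff by blast
qed

lemma p1_neighbour_q1:
  assumes "p m T s 1" "j \<in> {1..4}"
  shows "q m R1 R2 T (shift s (u j)) 1"
proof -
  have "T s \<in> {1..m}" and bottom: "T (shift s (u 1)) = 0"
    using assms(1) p1_iff by blast+
  then have "rises n m (T (shift s (u 1))) (T s)"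
    using rises_from_zero_iff[OF solution_range[OF solution] m_less_n] by simp
  then have "\<not> valley n m T s"
    using rises_asym[OF gap] unfolding valley_def ball_1_to_4 by auto
  then have "peak n m T s" using peak_or_valley by blast
  moreover have "T (shift s (u j)) = 0"
    using \<open>peak n m T s\<close> assms(2) bottom unfolding peak_def by auto
  ultimately show ?thesis
    using peak_neighbour_valley[OF _ assms(2)] valley_at_zero_q1 by blast
qed

lemma q1_neighbour_p1:
  assumes "q m R1 R2 T s 1" "j \<in> {1..4}"
  shows "p m T (shift s (u j)) 1"
proof -
  define t where "t = shift s (u j)"
  have bottom: "T s = 0" and "(T (shift s (u 2)), T (shift s (u 1))) \<in> R1"
    using assms(1) q1_iff by blast+
  then have "rises n m (T s) (T (shift s (u 1)))"
    using R1_range rises_from_zero_iff[OF solution_range[OF solution] m_less_n] by auto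
  then have "\<not> peak n m T s"
    using rises_asym[OF gap] unfolding peak_def ball_1_to_4 by auto
  then have "valley n m T s" using peak_or_valley by blast
  then have "peak n m T t"
    using valley_neighbour_peak assms(2) unfolding t_def by blast
  have "rises n m 0 (T t)"
    using \<open>valley n m T s\<close> assms(2) bottom unfolding t_def valley_def by force
  then have top: "T t \<in> {1..m}"
    using rises_from_zero_iff[OF solution_range[OF solution] m_less_n] by blast
  obtain j' where j': "j' \<in> {1..4}" "shift t (u j') = s"
    using neighbour_back[OF assms(2)] unfolding t_def by blast
  have "T (shift t (u j')) = T (shift t (u 1))"
    using \<open>peak n m T t\<close> j'(1) unfolding peak_def by blast
  moreover have "T (shift t (u 2)) = T (shift t (u 1))"
    using \<open>peak n m T t\<close> unfolding peak_def ball_1_to_4 by blast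
  ultimately have "T (shift t (u 1)) = 0" "T (shift t (u 2)) = 0"
    using j'(2) bottom by simp_all
  then have "p m T t 1" using top by (simp add: p1_iff)
  then show ?thesis unfolding t_def .
qed

end

theorem lemma3p4:
  fixes m n :: int and R1 R2 :: "(int \<times> int) set" and T :: "int \<times> int \<Rightarrow> int"
    and s :: "int \<times> int"
  assumes "m \<ge> 1"
    and "R1 \<subseteq> {1..m} \<times> {1..m}" and "R2 \<subseteq> {1..m} \<times> {1..m}"
    and "n \<ge> 2 * m + 1"
    and "is_solution n m R1 R2 T"
  shows "(p m T s 1 \<longrightarrow> (\<forall>j\<in>{1..4}. q m R1 R2 T (shift s (u j)) 1))
       \<and> (q m R1 R2 T s 1 \<longrightarrow> (\<forall>j\<in>{1..4}. p m T (shift s (u j)) 1))"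
proof -
  interpret triomino_solution n m R1 R2 T
    using assms by unfold_locales auto
  show ?thesis using p1_neighbour_q1 q1_neighbour_p1 by blast
qed

end
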